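(* Let $d\ge1$, $p\ge1$ and $\sigma>0$. There exists a probability measure $\mu\in \bigcap_{q\ge 1}\mathcal P_q(\mathbb R^d)$ such that for every $\varepsilon>0$ there exist a constant $C>0$ depending only on $p$ and an integer $N_\varepsilon$ depending only on $\varepsilon,\sigma,d$ such that \[ \mathbb E\big[\big({\mathcal W}_p^{(\sigma)}(\mu_N,\mu)\big)^p\big]\ \ge\ C\,N^{-1/2-\varepsilon}\qquad\text{for all }N\ge N_\varepsilon. \]
   Context: $\mathcal P_q(\mathbb R^d)$ is the set of Borel probability measures on $\mathbb R^d$ with finite $q$-th moment. ${\mathcal W}_p$ is the $p$-Wasserstein distance, ${\mathcal N}_\sigma$ the centered Gaussian distribution on $\mathbb R^d$ with covariance $\sigma^2 I_d$, and ${\mathcal W}_p^{(\sigma)}(\mu,\nu)={\mathcal W}_p(\mu*{\mathcal N}_\sigma,\nu*{\mathcal N}_\sigma)$. $(X_k)_{k\ge1}$ is an i.i.d. sequence of $\mu$-distributed random variables and $\mu_N=\frac1N\sum_{k=1}^N\delta_{X_k}$. *)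

theory Defs
  imports "HOL-Probability.Probability"
begin

definition P_q :: "real \<Rightarrow> ('a::euclidean_space) measure set" where
  "P_q q = {\<mu>. prob_space \<mu> \<and> sets \<mu> = sets borel \<and>
              (\<integral>\<^sup>+x. ennreal (norm x powr q) \<partial>\<mu>) < \<infinity>}"

definition couplings :: "('a::euclidean_space) measure \<Rightarrow> 'a measure \<Rightarrow> ('a \<times> 'a) measure set" where
  "couplings \<mu> \<nu> = {\<pi>. prob_space \<pi> \<and> sets \<pi> = sets (borel \<Otimes>\<^sub>M borel) \<and>
                      distr \<pi> borel fst = \<mu> \<and> distr \<pi> borel snd = \<nu>}"

definition wasserstein_cost :: "real \<Rightarrow> ('a::euclidean_space) measure \<Rightarrow> 'a measure \<Rightarrow> ennreal" where
  "wasserstein_cost p \<mu> \<nu> =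
     (INF \<pi>\<in>couplings \<mu> \<nu>. \<integral>\<^sup>+z. ennreal (norm (fst z - snd z) powr p) \<partial>\<pi>)"

text \<open>p-Wasserstein distance (for measures in P_p the cost is finite).\<close>
definition wasserstein :: "real \<Rightarrow> ('a::euclidean_space) measure \<Rightarrow> 'a measure \<Rightarrow> real" where
  "wasserstein p \<mu> \<nu> = enn2real (wasserstein_cost p \<mu> \<nu>) powr (1 / p)"

definition gaussian :: "real \<Rightarrow> ('a::euclidean_space) measure" where
  "gaussian \<sigma> = density lborel (\<lambda>x. ennreal ((2 * pi * \<sigma>\<^sup>2) powr (- real DIM('a) / 2)
                                     * exp (- (norm x)\<^sup>2 / (2 * \<sigma>\<^sup>2))))"

definition smooth_wasserstein :: "real \<Rightarrow> real \<Rightarrow> ('a::ordered_euclidean_space) measure \<Rightarrow> 'a measure \<Rightarrow> real" where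
  "smooth_wasserstein \<sigma> p \<mu> \<nu> = wasserstein p (\<mu> \<star> gaussian \<sigma>) (\<nu> \<star> gaussian \<sigma>)"

definition empirical :: "(nat \<Rightarrow> 'a::euclidean_space) \<Rightarrow> nat \<Rightarrow> 'a measure" where
  "empirical X N = distr (uniform_count_measure {..<N}) borel X"

end

(*
  The witness puts mass 2^-(i+1) at the point i^2 e, e a unit vector, so it has moments of all
  orders, and between the radii i^2 and (i+1)^2 it has no mass at all. Moving mass across such a
  gap costs at least 1 per unit, so W_p^p of the smoothed measures is at least the excess of the
  empirical over the true mass beyond (i+1)^2, up to twice the Gaussian tail at radius i that the
  smoothing can leak across the gap. For i of order (2 eps / ln 2) ln N this leak is below 1/(64 N)
  while the true mass q beyond (i+1)^2 is at least N^(-2 eps)/4. The excess is a centred binomial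
  count divided by N, and a fourth moment bound shows that its positive part has mean of order
  sqrt (N q) / N, which is at least N^(-1/2 - eps) up to a constant.
*)
theory Submission
  imports Defs
begin

lemma power_le_exp:
  fixes x :: real
  assumes "x \<ge> 0" "m > 0"
  shows "x ^ m \<le> real m ^ m * exp x"
proof -
  have "(x / real m) ^ m \<le> (1 + x / real m) ^ m"
    using assms by (intro power_mono) auto
  also have "\<dots> \<le> exp x"
    using assms by (intro exp_ge_one_plus_x_over_n_power_n) auto
  finally have "(x / real m) ^ m \<le> exp x" .
  then show ?thesis using assms by (simp add: power_divide field_simps)
qed

lemma powr_le_one_plus_power:
  fixes x q :: real
  assumes "x \<ge> 0" "q \<ge> 0" "q \<le> real m"
  shows "x powr q \<le> 1 + x ^ m"
proof (cases "x \<le> 1")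
  case True
  then have "x powr q \<le> 1"
    using assms powr_mono2[of q x 1] by (cases "x = 0") auto
  then show ?thesis using assms by (smt (verit) zero_le_power)
next
  case False
  then have "x powr q \<le> x powr real m"
    using assms by (intro powr_mono) auto
  also have "\<dots> = x ^ m" using False by (simp add: powr_realpow)
  finally show ?thesis by simp
qed

lemma norm_add_powr_le:
  fixes x y :: "'a::real_normed_vector"
  assumes "p \<ge> 0"
  shows "norm (x + y) powr p \<le> 2 powr p * (norm x powr p + norm y powr p)"
proof -
  have "norm (x + y) powr p \<le> (2 * max (norm x) (norm y)) powr p"
    by (intro powr_mono2 assms) (auto simp: norm_triangle_le)
  also have "\<dots> = 2 powr p * max (norm x) (norm y) powr p"
    by (simp add: powr_mult)
  also have "max (norm x) (norm y) powr p \<le> norm x powr p + norm y powr p"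
    by (auto simp: max_def)
  finally show ?thesis by (simp add: mult_left_mono)
qed

lemma summable_power_mult_half_power:
  "summable (\<lambda>i::nat. (real i) ^ m * (1/2) ^ i)"
proof (cases "m = 0")
  case True then show ?thesis by (simp add: summable_geometric)
next
  case False
  define t :: real where "t = ln 2 / 2"
  have t: "t > 0" by (simp add: t_def)
  define C where "C = (real m / t) ^ m"
  have b: "(real i) ^ m * (1/2) ^ i \<le> C * (exp (- t)) ^ i" for i
  proof -
    have "(t * real i) ^ m \<le> real m ^ m * exp (t * real i)"
      using False t by (intro power_le_exp) auto
    then have "(real i) ^ m \<le> C * exp (t * real i)"
      using t by (simp add: C_def power_mult_distrib power_divide field_simps)
    moreover have "exp (t * real i) * (1/2) ^ i = (exp (- t)) ^ i"
    proof -
      have "(1/2::real) ^ i = exp (- (2 * t) * real i)"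
      proof -
        have "exp (ln 2 * real i) = (2::real) ^ i"
          by (subst mult.commute, subst exp_of_nat_mult) simp
        then show ?thesis
          by (simp add: t_def exp_minus power_one_over inverse_eq_divide)
      qed
      then show ?thesis by (simp add: exp_add[symmetric] exp_of_nat_mult[symmetric] algebra_simps)
    qed
    ultimately show ?thesis
      by (metis (no_types, lifting) mult.assoc mult_right_mono zero_le_divide_1_iff zero_le_numeral zero_le_power)
  qed
  show ?thesis
  proof (rule summable_comparison_test[OF _ summable_mult[OF summable_geometric]])
    show "\<exists>N. \<forall>n\<ge>N. norm (real n ^ m * (1 / 2) ^ n) \<le> C * exp (- t) ^ n"
      using b by auto
    show "norm (exp (- t)) < 1" using t by simp
  qed
qed

lemma abs_ge_power2_div_sub_power4_div:
  fixes y m :: real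
  assumes "m > 0"
  shows "\<bar>y\<bar> \<ge> y^2 / m - y^4 / m^3"
proof (cases "\<bar>y\<bar> \<le> m")
  case True
  have "y^2 = \<bar>y\<bar> * \<bar>y\<bar>" by (simp add: power2_eq_square abs_mult_self_eq)
  also have "\<dots> \<le> \<bar>y\<bar> * m" using True by (intro mult_left_mono) auto
  finally have "y^2 / m \<le> \<bar>y\<bar>" using assms by (simp add: divide_le_eq)
  moreover have "y^4 / m^3 \<ge> 0" using assms by (simp add: zero_le_even_power)
  ultimately show ?thesis by linarith
next
  case False
  then have "m < \<bar>y\<bar>" by simp
  then have "m^2 \<le> \<bar>y\<bar>^2" using assms by (intro power_mono) auto
  then have d: "y^2 - m^2 \<ge> 0" by simp
  have eq: "y^4 / m^3 - y^2 / m = y^2 * (y^2 - m^2) / m^3"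
    using assms by (simp add: field_simps power2_eq_square power3_eq_cube) algebra
  have "y^2 * (y^2 - m^2) / m^3 \<ge> 0" using assms d by simp
  then have "y^2 / m \<le> y^4 / m^3" using eq by linarith
  then show ?thesis by simp
qed

lemma ennreal_integral_le_nn_integral:
  assumes "integrable M f"
  shows "ennreal (\<integral>x. f x \<partial>M) \<le> (\<integral>\<^sup>+x. ennreal (f x) \<partial>M)"
proof -
  have i: "integrable M (\<lambda>x. max 0 (f x))" using assms by auto
  have "(\<integral>x. f x \<partial>M) \<le> (\<integral>x. max 0 (f x) \<partial>M)"
    by (rule integral_mono[OF assms i]) simp
  then have "ennreal (\<integral>x. f x \<partial>M) \<le> ennreal (\<integral>x. max 0 (f x) \<partial>M)"
    by (rule ennreal_leI)
  also have "\<dots> = (\<integral>\<^sup>+x. ennreal (max 0 (f x)) \<partial>M)"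
    by (rule nn_integral_eq_integral[symmetric]) (use i in auto)
  also have "\<dots> = (\<integral>\<^sup>+x. ennreal (f x) \<partial>M)"
    by (intro nn_integral_cong) (simp add: max_def ennreal_neg)
  finally show ?thesis .
qed

section \<open>Gaussian measure\<close>

lemma borel_norm_ge[measurable]: "{z::'a::euclidean_space. b \<le> norm z} \<in> sets borel"
proof -
  have "{z \<in> space borel. b \<le> norm z} \<in> sets (borel::'a measure)" by measurable
  then show ?thesis by simp
qed

lemma borel_norm_gt[measurable]: "{z::'a::euclidean_space. b < norm z} \<in> sets borel"
proof -
  have "{z \<in> space borel. b < norm z} \<in> sets (borel::'a measure)" by measurable
  then show ?thesis by simp
qed

lemma borel_norm_shift_ge[measurable]: "{z::'a::euclidean_space. b \<le> norm (z + x)} \<in> sets borel"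
proof -
  have "{z \<in> space borel. b \<le> norm (z + x)} \<in> sets (borel::'a measure)" by measurable
  then show ?thesis by simp
qed

lemma nn_integral_lborel_prod_basis:
  fixes \<phi> :: "real \<Rightarrow> ennreal"
  assumes [measurable]: "\<phi> \<in> borel_measurable borel"
  shows "(\<integral>\<^sup>+x. (\<Prod>b\<in>Basis. \<phi> (x \<bullet> b)) \<partial>(lborel::'a::euclidean_space measure))
         = (\<integral>\<^sup>+t. \<phi> t \<partial>lborel) ^ DIM('a)"
proof -
  interpret product_sigma_finite "\<lambda>_::'a. lborel::real measure" ..
  have "(\<integral>\<^sup>+x. (\<Prod>b\<in>Basis. \<phi> (x \<bullet> b)) \<partial>(lborel::'a measure))
     = (\<integral>\<^sup>+f. (\<Prod>b\<in>Basis. \<phi> ((\<Sum>b'\<in>Basis. f b' *\<^sub>R b') \<bullet> b)) \<partial>(\<Pi>\<^sub>M b\<in>(Basis::'a set). lborel))"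
    by (subst lborel_eq) (simp add: nn_integral_distr)
  also have "\<dots> = (\<integral>\<^sup>+f. (\<Prod>b\<in>Basis. \<phi> (f b)) \<partial>(\<Pi>\<^sub>M b\<in>(Basis::'a set). lborel))"
    by (intro nn_integral_cong prod.cong refl)
       (simp add: inner_sum_left inner_Basis if_distrib cong: if_cong)
  also have "\<dots> = (\<Prod>b\<in>(Basis::'a set). \<integral>\<^sup>+t. \<phi> t \<partial>lborel)"
    by (rule product_nn_integral_prod) auto
  finally show ?thesis by simp
qed

lemma gaussian_density_eq_prod:
  fixes x :: "'a::euclidean_space"
  assumes "\<sigma> > 0"
  shows "(2 * pi * \<sigma>\<^sup>2) powr (- real DIM('a) / 2) * exp (- (norm x)\<^sup>2 / (2 * \<sigma>\<^sup>2))
        = (\<Prod>b\<in>Basis. normal_density 0 \<sigma> (x \<bullet> b))"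
proof -
  have pos: "2 * pi * \<sigma>\<^sup>2 > 0" using assms by simp
  have n: "(norm x)\<^sup>2 = (\<Sum>b\<in>Basis. (x \<bullet> b)\<^sup>2)"
    by (simp only: power2_norm_eq_inner, subst euclidean_inner, simp add: power2_eq_square)
  have "(\<Prod>b\<in>Basis. normal_density 0 \<sigma> (x \<bullet> b))
      = (\<Prod>b\<in>(Basis::'a set). 1 / sqrt (2 * pi * \<sigma>\<^sup>2)) * (\<Prod>b\<in>Basis. exp (- (x \<bullet> b)\<^sup>2 / (2 * \<sigma>\<^sup>2)))"
    unfolding normal_density_def prod.distrib by simp
  also have "(\<Prod>b\<in>(Basis::'a set). exp (- (x \<bullet> b)\<^sup>2 / (2 * \<sigma>\<^sup>2))) = exp (- (norm x)\<^sup>2 / (2 * \<sigma>\<^sup>2))"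
    by (simp add: exp_sum[symmetric] n sum_negf sum_divide_distrib)
  also have "(\<Prod>b\<in>(Basis::'a set). 1 / sqrt (2 * pi * \<sigma>\<^sup>2)) = (2 * pi * \<sigma>\<^sup>2) powr (- real DIM('a) / 2)"
  proof -
    have "(\<Prod>b\<in>(Basis::'a set). 1 / sqrt (2 * pi * \<sigma>\<^sup>2)) = ((2 * pi * \<sigma>\<^sup>2) powr (-1/2)) ^ DIM('a)"
      using pos by (simp add: sqrt_def powr_minus_divide root_powr_inverse powr_minus)
    also have "\<dots> = (2 * pi * \<sigma>\<^sup>2) powr (- real DIM('a) / 2)"
      using pos by (subst powr_power) auto
    finally show ?thesis .
  qed
  finally show ?thesis by simp
qed

lemma gaussian_eq_density_prod:
  assumes "\<sigma> > 0"
  shows "(gaussian \<sigma> :: 'a::euclidean_space measure)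
     = density lborel (\<lambda>x. ennreal (\<Prod>b\<in>Basis. normal_density 0 \<sigma> (x \<bullet> b)))"
  unfolding gaussian_def
  by (rule arg_cong[where f="density lborel"], rule ext, subst gaussian_density_eq_prod[OF assms], rule refl)

lemma sets_gaussian[simp, measurable_cong]: "sets (gaussian \<sigma>) = sets borel"
  by (simp add: gaussian_def)

lemma space_gaussian[simp]: "space (gaussian \<sigma>) = UNIV"
  by (simp add: gaussian_def)

lemma prob_space_gaussian:
  assumes "\<sigma> > 0"
  shows "prob_space (gaussian \<sigma> :: 'a::euclidean_space measure)"
proof
  have "emeasure (gaussian \<sigma> :: 'a measure) (space (gaussian \<sigma>))
     = (\<integral>\<^sup>+x. (\<Prod>b\<in>Basis. ennreal (normal_density 0 \<sigma> (x \<bullet> b))) \<partial>(lborel::'a measure))"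
    by (simp add: gaussian_eq_density_prod[OF assms] emeasure_density prod_ennreal)
  also have "\<dots> = (\<integral>\<^sup>+t. ennreal (normal_density 0 \<sigma> t) \<partial>lborel) ^ DIM('a)"
    by (rule nn_integral_lborel_prod_basis) simp
  also have "(\<integral>\<^sup>+t. ennreal (normal_density 0 \<sigma> t) \<partial>lborel) = 1"
    using prob_space.emeasure_space_1[OF prob_space_normal_density[OF assms, of 0]]
    by (simp add: emeasure_density)
  finally show "emeasure (gaussian \<sigma> :: 'a measure) (space (gaussian \<sigma>)) = 1" by simp
qed

lemma nn_integral_gaussian_exp_norm_sq:
  assumes "\<sigma> > 0"
  shows "(\<integral>\<^sup>+x. ennreal (exp ((norm x)\<^sup>2 / (4 * \<sigma>\<^sup>2))) \<partial>(gaussian \<sigma> :: 'a::euclidean_space measure))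
     = ennreal (sqrt 2 ^ DIM('a))"
proof -
  have key: "normal_density 0 \<sigma> t * exp (t\<^sup>2 / (4 * \<sigma>\<^sup>2)) = sqrt 2 * normal_density 0 (sqrt 2 * \<sigma>) t" for t
  proof -
    have "exp (- t\<^sup>2 / (2 * \<sigma>\<^sup>2)) * exp (t\<^sup>2 / (4 * \<sigma>\<^sup>2)) = exp (- t\<^sup>2 / (2 * (sqrt 2 * \<sigma>)\<^sup>2))"
      using assms by (simp add: exp_add[symmetric] power_mult_distrib field_simps)
    moreover have "1 / sqrt (2 * pi * \<sigma>\<^sup>2) = sqrt 2 * (1 / sqrt (2 * pi * (sqrt 2 * \<sigma>)\<^sup>2))"
      using assms by (simp add: power_mult_distrib real_sqrt_mult field_simps)
    ultimately show ?thesis unfolding normal_density_def by (simp add: mult_ac)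
  qed
  have "(\<integral>\<^sup>+x. ennreal (exp ((norm x)\<^sup>2 / (4 * \<sigma>\<^sup>2))) \<partial>(gaussian \<sigma> :: 'a measure))
     = (\<integral>\<^sup>+x. (\<Prod>b\<in>Basis. ennreal (normal_density 0 \<sigma> (x \<bullet> b)))
               * ennreal (exp ((norm x)\<^sup>2 / (4 * \<sigma>\<^sup>2))) \<partial>(lborel::'a measure))"
    by (simp add: gaussian_eq_density_prod[OF assms] nn_integral_density prod_ennreal)
  also have "\<dots> = (\<integral>\<^sup>+x. (\<Prod>b\<in>Basis. ennreal (normal_density 0 \<sigma> (x \<bullet> b) * exp ((x \<bullet> b)\<^sup>2 / (4 * \<sigma>\<^sup>2)))) \<partial>(lborel::'a measure))"
  proof (intro nn_integral_cong)
    fix x :: 'a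
    have n: "(norm x)\<^sup>2 = (\<Sum>b\<in>Basis. (x \<bullet> b)\<^sup>2)"
      by (simp only: power2_norm_eq_inner, subst euclidean_inner, simp add: power2_eq_square)
    have "exp ((norm x)\<^sup>2 / (4 * \<sigma>\<^sup>2)) = (\<Prod>b\<in>Basis. exp ((x \<bullet> b)\<^sup>2 / (4 * \<sigma>\<^sup>2)))"
      by (simp add: exp_sum[symmetric] n sum_divide_distrib)
    then show "(\<Prod>b\<in>Basis. ennreal (normal_density 0 \<sigma> (x \<bullet> b))) * ennreal (exp ((norm x)\<^sup>2 / (4 * \<sigma>\<^sup>2)))
       = (\<Prod>b\<in>Basis. ennreal (normal_density 0 \<sigma> (x \<bullet> b) * exp ((x \<bullet> b)\<^sup>2 / (4 * \<sigma>\<^sup>2))))"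
      by (simp add: prod_ennreal ennreal_mult[symmetric] prod_nonneg prod.distrib)
  qed
  also have "\<dots> = (\<integral>\<^sup>+t. ennreal (normal_density 0 \<sigma> t * exp (t\<^sup>2 / (4 * \<sigma>\<^sup>2))) \<partial>lborel) ^ DIM('a)"
    by (rule nn_integral_lborel_prod_basis) simp
  also have "(\<integral>\<^sup>+t. ennreal (normal_density 0 \<sigma> t * exp (t\<^sup>2 / (4 * \<sigma>\<^sup>2))) \<partial>lborel) = ennreal (sqrt 2)"
  proof -
    have "(\<integral>\<^sup>+t. ennreal (normal_density 0 \<sigma> t * exp (t\<^sup>2 / (4 * \<sigma>\<^sup>2))) \<partial>lborel)
        = (\<integral>\<^sup>+t. ennreal (sqrt 2) * ennreal (normal_density 0 (sqrt 2 * \<sigma>) t) \<partial>lborel)"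
      by (simp add: key ennreal_mult)
    also have "\<dots> = ennreal (sqrt 2) * (\<integral>\<^sup>+t. ennreal (normal_density 0 (sqrt 2 * \<sigma>) t) \<partial>lborel)"
      by (simp add: nn_integral_cmult)
    also have "(\<integral>\<^sup>+t. ennreal (normal_density 0 (sqrt 2 * \<sigma>) t) \<partial>lborel) = 1"
      using prob_space.emeasure_space_1[OF prob_space_normal_density[of "sqrt 2 * \<sigma>" 0]] assms
      by (simp add: emeasure_density)
    finally show ?thesis by simp
  qed
  finally show ?thesis by (simp add: ennreal_power)
qed

text \<open>The \<^verbatim>\<open>itself\<close> argument only fixes the dimension of the ambient space.\<close>

definition gaussian_tail :: "real \<Rightarrow> real \<Rightarrow> 'a::euclidean_space itself \<Rightarrow> real" where
  "gaussian_tail \<sigma> s _ = measure (gaussian \<sigma> :: 'a measure) {z. norm z \<ge> s}"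

lemma gaussian_tail_le:
  assumes "\<sigma> > 0" "s \<ge> 0"
  shows "gaussian_tail \<sigma> s TYPE('a::euclidean_space) \<le> sqrt 2 ^ DIM('a) * exp (- s\<^sup>2 / (4 * \<sigma>\<^sup>2))"
proof -
  interpret G: prob_space "gaussian \<sigma> :: 'a measure" by (rule prob_space_gaussian[OF assms(1)])
  have S: "{z::'a. norm z \<ge> s} \<in> sets (gaussian \<sigma>)" by simp
  have "emeasure (gaussian \<sigma> :: 'a measure) {z. norm z \<ge> s} = (\<integral>\<^sup>+z. indicator {z. norm z \<ge> s} z \<partial>(gaussian \<sigma> :: 'a measure))"
    using S by simp
  also have "\<dots> \<le> (\<integral>\<^sup>+z. ennreal (exp (- s\<^sup>2 / (4 * \<sigma>\<^sup>2))) * ennreal (exp ((norm z)\<^sup>2 / (4 * \<sigma>\<^sup>2))) \<partial>(gaussian \<sigma> :: 'a measure))"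
  proof (intro nn_integral_mono)
    fix z :: 'a
    show "indicator {z. norm z \<ge> s} z \<le> ennreal (exp (- s\<^sup>2 / (4 * \<sigma>\<^sup>2))) * ennreal (exp ((norm z)\<^sup>2 / (4 * \<sigma>\<^sup>2)))"
    proof (cases "norm z \<ge> s")
      case True
      then have "s\<^sup>2 \<le> (norm z)\<^sup>2" using assms(2) by (intro power_mono) auto
      then have "1 \<le> exp (- s\<^sup>2 / (4 * \<sigma>\<^sup>2)) * exp ((norm z)\<^sup>2 / (4 * \<sigma>\<^sup>2))"
        using assms by (simp add: exp_add[symmetric] divide_simps)
      then show ?thesis using True by (simp add: ennreal_mult[symmetric] indicator_def)
    qed (simp add: indicator_def)
  qed
  also have "\<dots> = ennreal (exp (- s\<^sup>2 / (4 * \<sigma>\<^sup>2))) * ennreal (sqrt 2 ^ DIM('a))"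
    by (simp add: nn_integral_cmult nn_integral_gaussian_exp_norm_sq[OF assms(1)])
  finally have "emeasure (gaussian \<sigma> :: 'a measure) {z. norm z \<ge> s} \<le> ennreal (sqrt 2 ^ DIM('a) * exp (- s\<^sup>2 / (4 * \<sigma>\<^sup>2)))"
    by (simp add: ennreal_mult[symmetric] mult.commute)
  then show ?thesis unfolding gaussian_tail_def using G.emeasure_eq_measure
    by (simp add: ennreal_le_iff)
qed

lemma gaussian_moment_finite:
  assumes "\<sigma> > 0" "p \<ge> 0"
  shows "(\<integral>\<^sup>+z. ennreal (norm z powr p) \<partial>(gaussian \<sigma> :: 'a::euclidean_space measure)) < \<infinity>"
proof -
  interpret G: prob_space "gaussian \<sigma> :: 'a measure" by (rule prob_space_gaussian[OF assms(1)])
  define m where "m = Suc (nat \<lceil>p\<rceil>)"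
  have pm: "p \<le> real m" "m > 0" unfolding m_def by linarith+
  define c where "c = 4 * \<sigma>\<^sup>2"
  have c: "c > 0" using assms by (simp add: c_def)
  define K where "K = c ^ m * real m ^ m"
  have b: "norm z powr p \<le> 1 + K * exp ((norm z)\<^sup>2 / (4 * \<sigma>\<^sup>2))" for z :: 'a
  proof -
    have "norm z powr p = ((norm z)\<^sup>2) powr (p/2)"
    proof (cases "norm z = 0")
      case False
      then have eq: "(norm z)\<^sup>2 = norm z powr 2" by (simp add: powr_realpow)
      have "norm z powr p = (norm z powr 2) powr (p/2)" by (subst powr_powr) simp
      then show ?thesis by (subst eq)
    next
      case True
      then show ?thesis by (simp add: powr_def)
    qed
    also have "\<dots> \<le> 1 + ((norm z)\<^sup>2) ^ m"
      using pm assms by (intro powr_le_one_plus_power) auto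
    also have "((norm z)\<^sup>2) ^ m = c ^ m * ((norm z)\<^sup>2 / c) ^ m"
      using c by (simp add: power_divide)
    also have "((norm z)\<^sup>2 / c) ^ m \<le> real m ^ m * exp ((norm z)\<^sup>2 / c)"
      using c pm by (intro power_le_exp) auto
    finally show ?thesis
      using c by (simp add: K_def c_def mult_left_mono mult.assoc)
  qed
  have "(\<integral>\<^sup>+z. ennreal (norm z powr p) \<partial>(gaussian \<sigma> :: 'a measure))
      \<le> (\<integral>\<^sup>+z. 1 + ennreal K * ennreal (exp ((norm z)\<^sup>2 / (4 * \<sigma>\<^sup>2))) \<partial>(gaussian \<sigma> :: 'a measure))"
  proof (intro nn_integral_mono)
    fix z :: 'a
    have K0: "K \<ge> 0" using c by (simp add: K_def)
    have "ennreal (norm z powr p) \<le> ennreal (1 + K * exp ((norm z)\<^sup>2 / (4 * \<sigma>\<^sup>2)))"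
      by (rule ennreal_leI[OF b])
    also have "\<dots> = 1 + ennreal K * ennreal (exp ((norm z)\<^sup>2 / (4 * \<sigma>\<^sup>2)))"
      using K0 by (simp add: ennreal_plus ennreal_mult)
    finally show "ennreal (norm z powr p) \<le> 1 + ennreal K * ennreal (exp ((norm z)\<^sup>2 / (4 * \<sigma>\<^sup>2)))" .
  qed
  also have "\<dots> = 1 + ennreal K * ennreal (sqrt 2 ^ DIM('a))"
    using G.emeasure_space_1 by (simp add: nn_integral_add nn_integral_cmult nn_integral_gaussian_exp_norm_sq[OF assms(1)])
  also have "\<dots> < \<infinity>" by (simp add: ennreal_mult_less_top)
  finally show ?thesis .
qed

section \<open>Transport cost and Gaussian smoothing\<close>

lemma distr_pair_measure_fst_borel:
  assumes "prob_space M" "prob_space N" "sets M = sets borel" "sets N = sets borel"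
  shows "distr (M \<Otimes>\<^sub>M N) borel fst = (M :: 'a::euclidean_space measure)"
proof -
  interpret N: prob_space N by fact
  have "distr (M \<Otimes>\<^sub>M N) borel fst = distr (M \<Otimes>\<^sub>M N) M fst"
    by (rule distr_cong) (auto simp: assms)
  also have "\<dots> = M" by (rule N.distr_pair_fst)
  finally show ?thesis .
qed

lemma distr_pair_measure_snd_borel:
  assumes "prob_space M" "prob_space N" "sets M = sets borel" "sets N = sets borel"
  shows "distr (M \<Otimes>\<^sub>M N) borel snd = (N :: 'a::euclidean_space measure)"
proof (rule measure_eqI)
  interpret M: prob_space M by fact
  interpret N: prob_space N by fact
  interpret pair_sigma_finite M N ..
  note [measurable_cong] = assms(3,4)
  have sp: "space M = UNIV" "space N = UNIV"
    using sets_eq_imp_space_eq[OF assms(3)] sets_eq_imp_space_eq[OF assms(4)] by auto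
  fix A assume A: "A \<in> sets (distr (M \<Otimes>\<^sub>M N) borel snd)"
  then have A': "A \<in> sets N" using assms by simp
  have "emeasure (distr (M \<Otimes>\<^sub>M N) borel snd) A = emeasure (M \<Otimes>\<^sub>M N) (space M \<times> A)"
    using A by (subst emeasure_distr) (auto simp: space_pair_measure sp intro!: arg_cong2[where f=emeasure])
  also have "\<dots> = emeasure N A"
    using A' by (subst N.emeasure_pair_measure_Times) (auto simp: M.emeasure_space_1)
  finally show "emeasure (distr (M \<Otimes>\<^sub>M N) borel snd) A = emeasure N A" .
qed (simp add: assms)

lemma wasserstein_cost_ge_measure_diff:
  fixes \<alpha> \<beta> :: "'a::euclidean_space measure"
  assumes "prob_space \<alpha>" "prob_space \<beta>" "sets \<alpha> = sets borel" "sets \<beta> = sets borel"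
    and A: "A \<in> sets borel" and B: "B \<in> sets borel" and AB: "\<And>x y. x \<in> A \<Longrightarrow> norm (x - y) < 1 \<Longrightarrow> y \<in> B"
    and p: "p \<ge> 0"
  shows "ennreal (measure \<alpha> A - measure \<beta> B) \<le> wasserstein_cost p \<alpha> \<beta>"
  unfolding wasserstein_cost_def
proof (rule INF_greatest)
  fix \<pi> assume "\<pi> \<in> couplings \<alpha> \<beta>"
  then have pi: "prob_space \<pi>" and hs: "sets \<pi> = sets (borel \<Otimes>\<^sub>M borel)"
    and m1: "distr \<pi> borel fst = \<alpha>" and m2: "distr \<pi> borel snd = \<beta>"
    by (auto simp: couplings_def)
  interpret prob_space \<pi> by fact
  note [measurable_cong] = hs
  have sp: "space \<pi> = UNIV" using sets_eq_imp_space_eq[OF hs] by (simp add: space_pair_measure)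
  define D where "D = {z::'a\<times>'a. norm (fst z - snd z) \<ge> 1}"
  have "{z \<in> space (borel \<Otimes>\<^sub>M borel). 1 \<le> norm (fst z - snd z)} \<in> sets (borel \<Otimes>\<^sub>M (borel::'a measure))"
    by measurable
  then have Dm: "D \<in> sets \<pi>" unfolding D_def hs by (simp add: space_pair_measure)
  have "{z \<in> space (borel \<Otimes>\<^sub>M borel). snd z \<in> B} \<in> sets (borel \<Otimes>\<^sub>M (borel::'a measure))"
    using B by measurable
  then have Bm: "snd -` B \<in> sets \<pi>" unfolding hs by (simp add: space_pair_measure vimage_def)
  have "measure \<alpha> A = measure \<pi> (fst -` A)"
    using A by (subst m1[symmetric], subst measure_distr) (auto simp: sp)
  moreover have "measure \<beta> B = measure \<pi> (snd -` B)"
    using B by (subst m2[symmetric], subst measure_distr) (auto simp: sp)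
  moreover have "measure \<pi> (fst -` A) \<le> measure \<pi> (snd -` B \<union> D)"
    by (rule finite_measure_mono) (use AB Dm Bm in \<open>auto simp: D_def not_le\<close>)
  moreover have "measure \<pi> (snd -` B \<union> D) \<le> measure \<pi> (snd -` B) + measure \<pi> D"
    by (rule measure_Un_le) (use Dm Bm in auto)
  ultimately have "measure \<alpha> A - measure \<beta> B \<le> measure \<pi> D" by simp
  then have "ennreal (measure \<alpha> A - measure \<beta> B) \<le> emeasure \<pi> D"
    by (simp add: emeasure_eq_measure)
  also have "\<dots> = (\<integral>\<^sup>+z. indicator D z \<partial>\<pi>)"
    using Dm by simp
  also have "\<dots> \<le> (\<integral>\<^sup>+z. ennreal (norm (fst z - snd z) powr p) \<partial>\<pi>)"
    by (intro nn_integral_mono) (auto simp: D_def indicator_def p ge_one_powr_ge_zero)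
  finally show "ennreal (measure \<alpha> A - measure \<beta> B) \<le> (\<integral>\<^sup>+z. ennreal (norm (fst z - snd z) powr p) \<partial>\<pi>)" .
qed

lemma wasserstein_cost_less_top:
  fixes \<alpha> \<beta> :: "'a::euclidean_space measure"
  assumes pa: "prob_space \<alpha>" and pb: "prob_space \<beta>" and sa: "sets \<alpha> = sets borel" and sb: "sets \<beta> = sets borel"
    and p: "p \<ge> 0"
    and ma: "(\<integral>\<^sup>+x. ennreal (norm x powr p) \<partial>\<alpha>) < \<infinity>"
    and mb: "(\<integral>\<^sup>+x. ennreal (norm x powr p) \<partial>\<beta>) < \<infinity>"
  shows "wasserstein_cost p \<alpha> \<beta> < \<infinity>"
proof -
  interpret A: prob_space \<alpha> by fact
  interpret B: prob_space \<beta> by fact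
  interpret P: pair_sigma_finite \<alpha> \<beta> ..
  interpret PP: prob_space "\<alpha> \<Otimes>\<^sub>M \<beta>" by (rule prob_space_pair) unfold_locales
  note [measurable_cong] = sa sb
  have cpl: "\<alpha> \<Otimes>\<^sub>M \<beta> \<in> couplings \<alpha> \<beta>"
    unfolding couplings_def
    using distr_pair_measure_fst_borel[OF pa pb sa sb] distr_pair_measure_snd_borel[OF pa pb sa sb]
    using PP.prob_space_axioms sets_pair_measure_cong[OF sa sb] by auto
  have "wasserstein_cost p \<alpha> \<beta> \<le> (\<integral>\<^sup>+z. ennreal (norm (fst z - snd z) powr p) \<partial>(\<alpha> \<Otimes>\<^sub>M \<beta>))"
    unfolding wasserstein_cost_def by (rule INF_lower[OF cpl])
  also have "\<dots> \<le> (\<integral>\<^sup>+z. ennreal (2 powr p) * (ennreal (norm (fst z) powr p) + ennreal (norm (snd z) powr p)) \<partial>(\<alpha> \<Otimes>\<^sub>M \<beta>))"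
    using norm_add_powr_le[OF p, of "fst _" "- snd _"]
    by (intro nn_integral_mono) (simp add: ennreal_mult[symmetric] ennreal_plus[symmetric] del: ennreal_plus)
  also have "\<dots> = ennreal (2 powr p) * ((\<integral>\<^sup>+z. ennreal (norm (fst z) powr p) \<partial>(\<alpha> \<Otimes>\<^sub>M \<beta>)) + (\<integral>\<^sup>+z. ennreal (norm (snd z) powr p) \<partial>(\<alpha> \<Otimes>\<^sub>M \<beta>)))"
    by (simp add: nn_integral_cmult nn_integral_add)
  also have "(\<integral>\<^sup>+z. ennreal (norm (fst z) powr p) \<partial>(\<alpha> \<Otimes>\<^sub>M \<beta>)) = (\<integral>\<^sup>+x. ennreal (norm x powr p) \<partial>\<alpha>)"
    by (subst distr_pair_measure_fst_borel[OF pa pb sa sb, symmetric]) (simp add: nn_integral_distr)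
  also have "(\<integral>\<^sup>+z. ennreal (norm (snd z) powr p) \<partial>(\<alpha> \<Otimes>\<^sub>M \<beta>)) = (\<integral>\<^sup>+x. ennreal (norm x powr p) \<partial>\<beta>)"
    by (subst distr_pair_measure_snd_borel[OF pa pb sa sb, symmetric]) (simp add: nn_integral_distr)
  also have "ennreal (2 powr p) * ((\<integral>\<^sup>+x. ennreal (norm x powr p) \<partial>\<alpha>) + (\<integral>\<^sup>+x. ennreal (norm x powr p) \<partial>\<beta>)) < \<infinity>"
    using ma mb by (simp add: ennreal_mult_less_top)
  finally show ?thesis .
qed

lemma prob_space_conv_gaussian:
  fixes M :: "'a::ordered_euclidean_space measure"
  assumes \<sigma>: "\<sigma> > 0" and M: "prob_space M" "sets M = sets borel"
  shows "prob_space (M \<star> gaussian \<sigma>)"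
proof -
  interpret G: prob_space "gaussian \<sigma> :: 'a measure" by (rule prob_space_gaussian[OF \<sigma>])
  interpret M: prob_space M by fact
  note [measurable_cong] = M(2)
  show ?thesis unfolding convolution_def
    by (intro prob_space.prob_space_distr prob_space_pair) (auto simp: M.prob_space_axioms G.prob_space_axioms)
qed

lemma measure_conv_gaussian_norm_ge:
  fixes M :: "'a::ordered_euclidean_space measure"
  assumes \<sigma>: "\<sigma> > 0" and M: "prob_space M" "sets M = sets borel" and a: "a \<ge> 0"
  shows "measure (M \<star> gaussian \<sigma>) {x. norm x \<ge> \<rho>} \<ge> measure M {x. norm x \<ge> \<rho> + a} - gaussian_tail \<sigma> a TYPE('a)"
proof -
  interpret G: prob_space "gaussian \<sigma> :: 'a measure" by (rule prob_space_gaussian[OF \<sigma>])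
  interpret M: prob_space M by fact
  note [measurable_cong] = M(2)
  have spM: "space M = UNIV" using sets_eq_imp_space_eq[OF M(2)] by simp
  define S where "S = {x::'a. norm x \<ge> \<rho> + a}"
  define h where "h = gaussian_tail \<sigma> a TYPE('a)"
  have h: "0 \<le> h" "h \<le> 1" unfolding h_def gaussian_tail_def by auto
  have ball: "emeasure (gaussian \<sigma>) {z::'a. norm z < a} = ennreal (1 - h)"
  proof -
    have e: "{z::'a. norm z < a} = space (gaussian \<sigma>) - {z. norm z \<ge> a}" by auto
    have "G.prob (space (gaussian \<sigma>) - {z::'a. norm z \<ge> a}) = 1 - h"
      unfolding h_def gaussian_tail_def by (rule G.prob_compl) simp
    then show ?thesis unfolding e by (simp only: G.emeasure_eq_measure)
  qed
  have "emeasure (M \<star> gaussian \<sigma>) {x. norm x \<ge> \<rho>} = (\<integral>\<^sup>+x. emeasure (gaussian \<sigma>) {z. z + x \<in> {x. norm x \<ge> \<rho>}} \<partial>M)"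
    by (rule convolution_emeasure) (auto simp: M spM G.finite_measure_axioms M.finite_measure_axioms)
  also have "\<dots> \<ge> (\<integral>\<^sup>+x. ennreal (1 - h) * indicator S x \<partial>M)"
  proof (intro nn_integral_mono)
    fix x :: 'a
    show "ennreal (1 - h) * indicator S x \<le> emeasure (gaussian \<sigma>) {z. z + x \<in> {x. norm x \<ge> \<rho>}}"
    proof (cases "x \<in> S")
      case True
      have sub: "{z::'a. norm z < a} \<subseteq> {z. z + x \<in> {x. norm x \<ge> \<rho>}}"
      proof safe
        fix z :: 'a assume "norm z < a"
        moreover have "norm x \<le> norm (z + x) + norm z"
          by (metis add_diff_cancel_left' norm_triangle_ineq4 add.commute)
        ultimately show "\<rho> \<le> norm (z + x)" using True by (auto simp: S_def)
      qed
      have "emeasure (gaussian \<sigma>) {z::'a. norm z < a} \<le> emeasure (gaussian \<sigma>) {z. z + x \<in> {x. norm x \<ge> \<rho>}}"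
        by (rule emeasure_mono[OF sub]) (simp add: borel_norm_shift_ge)
      then show ?thesis using True ball by simp
    qed simp
  qed
  finally have fin: "ennreal (1 - h) * emeasure M S \<le> emeasure (M \<star> gaussian \<sigma>) {x. norm x \<ge> \<rho>}"
    by (simp add: nn_integral_cmult S_def)
  interpret C: prob_space "M \<star> gaussian \<sigma>" by (rule prob_space_conv_gaussian[OF \<sigma> M])
  from fin have "(1 - h) * measure M S \<le> measure (M \<star> gaussian \<sigma>) {x. norm x \<ge> \<rho>}"
    using h by (simp add: C.emeasure_eq_measure M.emeasure_eq_measure ennreal_mult[symmetric])
  moreover have "measure M S - h \<le> (1 - h) * measure M S"
    using h M.prob_le_1[of S] by (simp add: algebra_simps mult_left_le)
  ultimately show ?thesis unfolding S_def h_def by linarith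
qed

lemma measure_conv_gaussian_norm_gt:
  fixes M :: "'a::ordered_euclidean_space measure"
  assumes \<sigma>: "\<sigma> > 0" and M: "prob_space M" "sets M = sets borel"
  shows "measure (M \<star> gaussian \<sigma>) {x. norm x > \<rho>} \<le> measure M {x. norm x > \<rho> - b} + gaussian_tail \<sigma> b TYPE('a)"
proof -
  interpret G: prob_space "gaussian \<sigma> :: 'a measure" by (rule prob_space_gaussian[OF \<sigma>])
  interpret M: prob_space M by fact
  note [measurable_cong] = M(2)
  have spM: "space M = UNIV" using sets_eq_imp_space_eq[OF M(2)] by simp
  define T where "T = {x::'a. norm x > \<rho> - b}"
  define h where "h = gaussian_tail \<sigma> b TYPE('a)"
  have h: "0 \<le> h" unfolding h_def gaussian_tail_def by auto
  interpret C: prob_space "M \<star> gaussian \<sigma>" by (rule prob_space_conv_gaussian[OF \<sigma> M])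
  have "emeasure (M \<star> gaussian \<sigma>) {x. norm x > \<rho>} = (\<integral>\<^sup>+x. emeasure (gaussian \<sigma>) {z. z + x \<in> {x. norm x > \<rho>}} \<partial>M)"
    by (rule convolution_emeasure) (auto simp: M spM G.finite_measure_axioms M.finite_measure_axioms)
  also have "\<dots> \<le> (\<integral>\<^sup>+x. indicator T x + ennreal h \<partial>M)"
  proof (intro nn_integral_mono)
    fix x :: 'a
    show "emeasure (gaussian \<sigma>) {z. z + x \<in> {x. norm x > \<rho>}} \<le> indicator T x + ennreal h"
    proof (cases "x \<in> T")
      case True
      have "emeasure (gaussian \<sigma>) {z. z + x \<in> {x. norm x > \<rho>}} \<le> 1"
        by (rule G.emeasure_le_1)
      then show ?thesis using True by (simp add: add_increasing2)
    next
      case False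
      have sub: "{z. z + x \<in> {x. norm x > \<rho>}} \<subseteq> {z::'a. norm z \<ge> b}"
      proof safe
        fix z :: 'a assume "\<rho> < norm (z + x)"
        moreover have "norm (z + x) \<le> norm z + norm x" by (rule norm_triangle_ineq)
        ultimately show "b \<le> norm z" using False by (auto simp: T_def)
      qed
      have "emeasure (gaussian \<sigma>) {z. z + x \<in> {x. norm x > \<rho>}} \<le> emeasure (gaussian \<sigma>) {z::'a. norm z \<ge> b}"
        by (rule emeasure_mono[OF sub]) (simp add: borel_norm_ge)
      also have "\<dots> = ennreal h" by (simp add: G.emeasure_eq_measure h_def gaussian_tail_def)
      finally show ?thesis using False by simp
    qed
  qed
  also have "\<dots> = emeasure M T + ennreal h"
    by (simp add: nn_integral_add M.emeasure_space_1 T_def)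
  finally have "measure (M \<star> gaussian \<sigma>) {x. norm x > \<rho>} \<le> measure M T + h"
    using h by (simp add: C.emeasure_eq_measure M.emeasure_eq_measure ennreal_plus[symmetric] del: ennreal_plus)
  then show ?thesis unfolding T_def h_def .
qed

lemma convolution_moment_finite:
  fixes M N :: "'a::ordered_euclidean_space measure"
  assumes M: "prob_space M" "sets M = sets borel" and N: "prob_space N" "sets N = sets borel" and p: "p \<ge> 0"
    and mM: "(\<integral>\<^sup>+x. ennreal (norm x powr p) \<partial>M) < \<infinity>"
    and mN: "(\<integral>\<^sup>+x. ennreal (norm x powr p) \<partial>N) < \<infinity>"
  shows "(\<integral>\<^sup>+x. ennreal (norm x powr p) \<partial>(M \<star> N)) < \<infinity>"
proof -
  interpret M: prob_space M by fact
  interpret N: prob_space N by fact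
  note [measurable_cong] = M(2) N(2)
  have "(\<integral>\<^sup>+x. ennreal (norm x powr p) \<partial>(M \<star> N)) = (\<integral>\<^sup>+x. \<integral>\<^sup>+y. ennreal (norm (x + y) powr p) \<partial>N \<partial>M)"
    by (rule nn_integral_convolution) (auto simp: M N M.finite_measure_axioms N.finite_measure_axioms)
  also have "\<dots> \<le> (\<integral>\<^sup>+x. \<integral>\<^sup>+y. ennreal (2 powr p) * (ennreal (norm x powr p) + ennreal (norm y powr p)) \<partial>N \<partial>M)"
    using norm_add_powr_le[OF p]
    by (intro nn_integral_mono) (simp add: ennreal_mult[symmetric] ennreal_plus[symmetric] del: ennreal_plus)
  also have "\<dots> = (\<integral>\<^sup>+x. ennreal (2 powr p) * (ennreal (norm x powr p) + (\<integral>\<^sup>+y. ennreal (norm y powr p) \<partial>N)) \<partial>M)"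
    by (intro nn_integral_cong) (simp add: nn_integral_cmult nn_integral_add N.emeasure_space_1)
  also have "\<dots> = ennreal (2 powr p) * ((\<integral>\<^sup>+x. ennreal (norm x powr p) \<partial>M) + (\<integral>\<^sup>+y. ennreal (norm y powr p) \<partial>N))"
    by (simp add: nn_integral_cmult nn_integral_add M.emeasure_space_1)
  also have "\<dots> < \<infinity>" using mM mN by (simp add: ennreal_mult_less_top)
  finally show ?thesis .
qed

section \<open>The witness measure\<close>

text \<open>\<^term>\<open>geometric_pmf (1/2)\<close> gives mass \<open>2^-(i+1)\<close> to \<open>i\<close>, which \<open>sq_atom\<close> sends to
  \<open>i\<^sup>2 e\<close> for a fixed basis vector \<open>e\<close>.\<close>

definition sq_atom :: "nat \<Rightarrow> 'a::euclidean_space" where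
  "sq_atom i = (real i)\<^sup>2 *\<^sub>R (SOME b. b \<in> Basis)"

lemma norm_sq_atom[simp]: "norm (sq_atom i :: 'a::euclidean_space) = (real i)\<^sup>2"
proof -
  have "(SOME b. b \<in> Basis) \<in> (Basis::'a set)"
    by (rule someI_ex) (use nonempty_Basis in blast)
  then show ?thesis by (simp add: sq_atom_def)
qed

definition sq_geometric :: "'a::euclidean_space measure" where
  "sq_geometric = distr (measure_pmf (geometric_pmf (1/2))) borel sq_atom"

lemma sets_sq_geometric[simp, measurable_cong]: "sets sq_geometric = sets borel"
  and space_sq_geometric[simp]: "space sq_geometric = UNIV"
  by (simp_all add: sq_geometric_def)

lemma prob_space_sq_geometric: "prob_space sq_geometric"
  unfolding sq_geometric_def by (rule prob_space.prob_space_distr) (auto simp: measure_pmf.prob_space_axioms)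

lemma sq_geometric_moment_finite:
  assumes q: "q \<ge> 0"
  shows "(\<integral>\<^sup>+x. ennreal (norm x powr q) \<partial>(sq_geometric :: 'a::euclidean_space measure)) < \<infinity>"
proof -
  define m where "m = nat \<lceil>q\<rceil>"
  have qm: "q \<le> real m" unfolding m_def by linarith
  define f where "f i = (1/2) ^ i * (1/2) * (1 + (real i) ^ (2 * m))" for i :: nat
  have fe: "f = (\<lambda>i. (1/2) * (1/2) ^ i + (1/2) * ((real i) ^ (2 * m) * (1/2) ^ i))"
    by (auto simp: f_def fun_eq_iff algebra_simps)
  have sf: "summable f"
    unfolding fe
    by (intro summable_add summable_mult summable_geometric summable_power_mult_half_power) auto
  have "(\<integral>\<^sup>+x. ennreal (norm x powr q) \<partial>(sq_geometric :: 'a measure))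
      = (\<integral>\<^sup>+i. ennreal (norm (sq_atom i :: 'a) powr q) \<partial>measure_pmf (geometric_pmf (1/2)))"
    unfolding sq_geometric_def by (simp add: nn_integral_distr)
  also have "\<dots> = (\<Sum>i. ennreal (pmf (geometric_pmf (1/2)) i) * ennreal ((real i)\<^sup>2 powr q))"
    by (simp add: nn_integral_measure_pmf nn_integral_count_space_nat)
  also have "\<dots> \<le> (\<Sum>i. ennreal (f i))"
  proof (intro suminf_le)
    fix i :: nat
    have "(real i)\<^sup>2 powr q \<le> 1 + ((real i)\<^sup>2) ^ m"
      using q qm by (intro powr_le_one_plus_power) auto
    then have "(1/2) ^ i * (1/2) * ((real i)\<^sup>2 powr q) \<le> f i"
      unfolding f_def by (intro mult_left_mono) (auto simp: power_mult)
    then show "ennreal (pmf (geometric_pmf (1/2)) i) * ennreal ((real i)\<^sup>2 powr q) \<le> ennreal (f i)"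
      by (simp add: ennreal_mult[symmetric]) (rule ennreal_leI, simp)
  qed auto
  also have "\<dots> = ennreal (\<Sum>i. f i)"
    by (rule suminf_ennreal2[OF _ sf]) (simp add: f_def)
  also have "\<dots> < \<infinity>" by simp
  finally show ?thesis .
qed

lemma sq_geometric_in_P_q: "q \<ge> 1 \<Longrightarrow> sq_geometric \<in> P_q q"
  unfolding P_q_def using prob_space_sq_geometric sq_geometric_moment_finite[of q] by auto

lemma measure_sq_geometric:
  assumes "S \<in> sets borel"
  shows "measure (sq_geometric :: 'a::euclidean_space measure) S = measure_pmf.prob (geometric_pmf (1/2)) (sq_atom -` S)"
  unfolding sq_geometric_def using assms by (subst measure_distr) auto

lemma measure_sq_geometric_norm_gt:
  "measure (sq_geometric :: 'a::euclidean_space measure) {x. norm x > (real i)\<^sup>2}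
     = measure_pmf.prob (geometric_pmf (1/2)) {j. j > i}"
proof -
  have "(real i)\<^sup>2 < (real j)\<^sup>2 \<longleftrightarrow> i < j" for j
    using power2_le_iff_abs_le[of "real i" "real j"]
    by (metis not_le of_nat_0_le_iff abs_of_nat of_nat_le_iff)
  then have "sq_atom -` {x::'a. norm x > (real i)\<^sup>2} = {j. j > i}" by auto
  then show ?thesis by (simp add: measure_sq_geometric)
qed

lemma measure_sq_geometric_norm_ge:
  "measure (sq_geometric :: 'a::euclidean_space measure) {x. norm x \<ge> (real i + 1)\<^sup>2}
     = measure_pmf.prob (geometric_pmf (1/2)) {j. j > i}"
proof -
  have "(real i + 1)\<^sup>2 \<le> (real j)\<^sup>2 \<longleftrightarrow> real i + 1 \<le> real j" for j
    by (rule power2_le_iff_abs_le[THEN trans]) auto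
  then have "sq_atom -` {x::'a. norm x \<ge> (real i + 1)\<^sup>2} = {j. j > i}" by auto
  then show ?thesis by (simp add: measure_sq_geometric)
qed

lemma geometric_half_prob_greater_bounds:
  "(1/2) ^ (i + 2) \<le> measure_pmf.prob (geometric_pmf (1/2)) {j. j > i}"
  "measure_pmf.prob (geometric_pmf (1/2)) {j. j > i} \<le> 1/2"
proof -
  have "measure_pmf.prob (geometric_pmf (1/2)) {Suc i} \<le> measure_pmf.prob (geometric_pmf (1/2)) {j. j > i}"
    by (intro measure_pmf.finite_measure_mono) auto
  then show "(1/2) ^ (i + 2) \<le> measure_pmf.prob (geometric_pmf (1/2)) {j. j > i}"
    by (simp add: measure_pmf_single)
  have "measure_pmf.prob (geometric_pmf (1/2)) {j. j > i} + measure_pmf.prob (geometric_pmf (1/2)) {0}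
      = measure_pmf.prob (geometric_pmf (1/2)) ({j. j > i} \<union> {0})"
    by (subst measure_pmf.finite_measure_Union) auto
  also have "\<dots> \<le> 1" by simp
  finally show "measure_pmf.prob (geometric_pmf (1/2)) {j. j > i} \<le> 1/2"
    by (simp add: measure_pmf_single)
qed

section \<open>Fluctuations of independent sums\<close>

context prob_space
begin

lemma indep_var_expectation_power_mult:
  fixes S Z :: "'a \<Rightarrow> real"
  assumes [measurable]: "S \<in> borel_measurable M" "Z \<in> borel_measurable M"
    and indep: "indep_var borel Z borel S"
    and S_bnd: "\<And>x. \<bar>S x\<bar> \<le> B" and Z_bnd: "\<And>x. \<bar>Z x\<bar> \<le> C"
  shows "integrable M (\<lambda>x. (S x)^a * (Z x)^b)"
    and "expectation (\<lambda>x. (S x)^a * (Z x)^b)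
           = expectation (\<lambda>x. (S x)^a) * expectation (\<lambda>x. (Z x)^b)"
proof -
  have intg: "integrable M (\<lambda>x. (S x)^a * (Z x)^b)" for a b
  proof (rule integrable_const_bound[where B="B ^ a * C ^ b"])
    have B: "0 \<le> B" using S_bnd[of undefined] by linarith
    show "AE x in M. norm ((S x)^a * (Z x)^b) \<le> B ^ a * C ^ b"
    proof (intro AE_I2)
      fix x
      have "\<bar>S x\<bar> ^ a \<le> B ^ a" "\<bar>Z x\<bar> ^ b \<le> C ^ b" by (intro power_mono S_bnd Z_bnd abs_ge_zero)+
      then have "\<bar>S x\<bar> ^ a * \<bar>Z x\<bar> ^ b \<le> B ^ a * C ^ b" using B by (intro mult_mono) auto
      then show "norm ((S x)^a * (Z x)^b) \<le> B ^ a * C ^ b" by (simp add: abs_mult power_abs)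
    qed
  qed measurable
  then show "integrable M (\<lambda>x. (S x)^a * (Z x)^b)" .
  have "indep_var borel ((\<lambda>z. z^b) \<circ> Z) borel ((\<lambda>y. y^a) \<circ> S)"
    by (rule indep_var_compose[OF indep]) auto
  then have "expectation (\<lambda>x. ((\<lambda>z. z^b) \<circ> Z) x * ((\<lambda>y. y^a) \<circ> S) x)
      = expectation ((\<lambda>z. z^b) \<circ> Z) * expectation ((\<lambda>y. y^a) \<circ> S)"
    by (rule indep_var_lebesgue_integral) (use intg[of a 0] intg[of 0 b] in \<open>simp_all add: comp_def\<close>)
  then show "expectation (\<lambda>x. (S x)^a * (Z x)^b)
      = expectation (\<lambda>x. (S x)^a) * expectation (\<lambda>x. (Z x)^b)"
    by (simp add: comp_def mult.commute)
qed

lemma moments_add_indep: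
  fixes S Z :: "'a \<Rightarrow> real"
  assumes [measurable]: "S \<in> borel_measurable M" "Z \<in> borel_measurable M"
    and indep: "indep_var borel Z borel S"
    and S_bnd: "\<And>x. \<bar>S x\<bar> \<le> B" and Z_bnd: "\<And>x. \<bar>Z x\<bar> \<le> 1"
    and ES: "expectation S = 0" and EZ: "expectation Z = 0"
    and EZ2: "expectation (\<lambda>x. (Z x)^2) = v"
  shows "expectation (\<lambda>x. S x + Z x) = 0"
    and "expectation (\<lambda>x. (S x + Z x)^2) = expectation (\<lambda>x. (S x)^2) + v"
    and "expectation (\<lambda>x. (S x + Z x)^4)
           \<le> expectation (\<lambda>x. (S x)^4) + 6 * v * expectation (\<lambda>x. (S x)^2) + v"
proof -
  note intg = indep_var_expectation_power_mult(1)[OF _ _ indep S_bnd Z_bnd]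
  note factor = indep_var_expectation_power_mult(2)[OF _ _ indep S_bnd Z_bnd]
  have iS: "integrable M (\<lambda>x. (S x)^a)" for a using intg[of a 0] by simp
  have iZ: "integrable M (\<lambda>x. (Z x)^b)" for b using intg[of 0 b] by simp
  have EZ4: "expectation (\<lambda>x. (Z x)^4) \<le> v"
  proof -
    have "(Z x)^4 \<le> (Z x)^2" for x
    proof -
      have "(Z x)^2 \<le> 1" using Z_bnd[of x] by (simp add: abs_square_le_1)
      then have "(Z x)^2 * (Z x)^2 \<le> 1 * (Z x)^2" by (intro mult_right_mono) auto
      then show ?thesis by (simp add: power_numeral_reduce)
    qed
    then have "expectation (\<lambda>x. (Z x)^4) \<le> expectation (\<lambda>x. (Z x)^2)"
      by (intro integral_mono iZ)
    then show ?thesis using EZ2 by simp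
  qed
  show "expectation (\<lambda>x. S x + Z x) = 0"
    using iS[of 1] iZ[of 1] ES EZ by simp
  have "(\<lambda>x. (S x + Z x)^2) = (\<lambda>x. (S x)^2 + 2 * ((S x)^1 * (Z x)^1) + (Z x)^2)"
    by (auto simp: power2_eq_square algebra_simps)
  then show "expectation (\<lambda>x. (S x + Z x)^2) = expectation (\<lambda>x. (S x)^2) + v"
    using iS[of 2] iZ[of 2] intg[of 1 1] factor[of 1 1] ES EZ2 by simp
  have "(\<lambda>x. (S x + Z x)^4) = (\<lambda>x. (S x)^4 + 4 * ((S x)^3 * (Z x)^1)
      + 6 * ((S x)^2 * (Z x)^2) + 4 * ((S x)^1 * (Z x)^3) + (Z x)^4)"
    by (auto simp: algebra_simps power_numeral_reduce)
  then have "expectation (\<lambda>x. (S x + Z x)^4)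
      = expectation (\<lambda>x. (S x)^4) + 6 * v * expectation (\<lambda>x. (S x)^2) + expectation (\<lambda>x. (Z x)^4)"
    using iS[of 4] iZ[of 4] intg[of 3 1] intg[of 2 2] intg[of 1 3]
      factor[of 3 1] factor[of 2 2] factor[of 1 3] ES EZ EZ2 by simp
  then show "expectation (\<lambda>x. (S x + Z x)^4)
      \<le> expectation (\<lambda>x. (S x)^4) + 6 * v * expectation (\<lambda>x. (S x)^2) + v"
    using EZ4 by linarith
qed

lemma indep_sum_moments:
  fixes Z :: "nat \<Rightarrow> 'a \<Rightarrow> real"
  assumes ind: "indep_vars (\<lambda>_. borel) Z UNIV"
    and bnd: "\<And>k x. \<bar>Z k x\<bar> \<le> 1"
    and EZ: "\<And>k. expectation (Z k) = 0"
    and EZ2: "\<And>k. expectation (\<lambda>x. (Z k x)^2) = v"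
  shows "expectation (\<lambda>x. \<Sum>k<n. Z k x) = 0"
    and "expectation (\<lambda>x. (\<Sum>k<n. Z k x)^2) = real n * v"
    and "expectation (\<lambda>x. (\<Sum>k<n. Z k x)^4) \<le> 3 * (real n)\<^sup>2 * v\<^sup>2 + real n * v"
proof -
  have [measurable]: "Z k \<in> borel_measurable M" for k
    using ind by (auto simp: indep_vars_def)
  have v: "v \<ge> 0" using EZ2[of 0, symmetric] by simp
  have "expectation (\<lambda>x. \<Sum>k<n. Z k x) = 0 \<and> expectation (\<lambda>x. (\<Sum>k<n. Z k x)^2) = real n * v
      \<and> expectation (\<lambda>x. (\<Sum>k<n. Z k x)^4) \<le> 3 * (real n)\<^sup>2 * v\<^sup>2 + real n * v"
  proof (induction n)
    case (Suc n)
    define S where "S x = (\<Sum>k<n. Z k x)" for x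
    have [measurable]: "S \<in> borel_measurable M" unfolding S_def by measurable
    have S_bnd: "\<bar>S x\<bar> \<le> real n" for x
    proof -
      have "\<bar>S x\<bar> \<le> (\<Sum>k<n. \<bar>Z k x\<bar>)" unfolding S_def by (rule sum_abs)
      also have "\<dots> \<le> (\<Sum>k<n. 1)" by (intro sum_mono bnd)
      finally show ?thesis by simp
    qed
    have "indep_var borel (Z n) borel S"
      unfolding S_def by (rule indep_vars_sum) (auto intro: indep_vars_subset[OF ind])
    have sum_Suc: "(\<Sum>k<Suc n. Z k x) = S x + Z n x" for x by (simp add: S_def)
    have IH: "expectation S = 0" "expectation (\<lambda>x. (S x)^2) = real n * v"
      "expectation (\<lambda>x. (S x)^4) \<le> 3 * (real n)\<^sup>2 * v\<^sup>2 + real n * v"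
      using Suc.IH unfolding S_def[abs_def] by simp_all
    note step = moments_add_indep[OF _ _ \<open>indep_var borel (Z n) borel S\<close> S_bnd bnd IH(1) EZ EZ2,
        simplified]
    have "expectation (\<lambda>x. (S x + Z n x)^4) \<le> 3 * (real n)\<^sup>2 * v\<^sup>2 + real n * v + 6 * v * (real n * v) + v"
      using step(3) IH(2,3) by simp
    also have "\<dots> \<le> 3 * (real (Suc n))\<^sup>2 * v\<^sup>2 + Suc n * v"
      using v by (simp add: power2_eq_square algebra_simps)
    finally show ?case using step(1,2) IH(2) by (simp only: sum_Suc) (simp add: algebra_simps)
  qed simp
  then show "expectation (\<lambda>x. \<Sum>k<n. Z k x) = 0"
    and "expectation (\<lambda>x. (\<Sum>k<n. Z k x)^2) = real n * v"
    and "expectation (\<lambda>x. (\<Sum>k<n. Z k x)^4) \<le> 3 * (real n)\<^sup>2 * v\<^sup>2 + real n * v"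
    by auto
qed

lemma expectation_max_0_ge:
  fixes Y :: "'a \<Rightarrow> real"
  assumes [measurable]: "Y \<in> borel_measurable M" and bnd: "\<And>x. \<bar>Y x\<bar> \<le> B"
    and EY: "expectation Y = 0" and EY2: "expectation (\<lambda>x. (Y x)^2) = s^2"
    and EY4: "expectation (\<lambda>x. (Y x)^4) \<le> 4 * s^4" and s: "s > 0"
  shows "3 / 32 * s \<le> expectation (\<lambda>x. max 0 (Y x))"
proof -
  have intb: "integrable M f" if "f \<in> borel_measurable M" "\<And>x. \<bar>f x\<bar> \<le> C" for f :: "'a \<Rightarrow> real" and C
    by (rule integrable_const_bound[where B=C]) (use that in auto)
  have iY: "integrable M (\<lambda>x. (Y x)^a)" for a
    by (rule intb[of _ "B ^ a"]) (use bnd in \<open>auto simp: power_abs intro: power_mono\<close>)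
  have iabs: "integrable M (\<lambda>x. \<bar>Y x\<bar>)" by (rule intb[of _ B]) (use bnd in auto)
  txt \<open>Integrate \<open>\<bar>y\<bar> \<ge> y\<^sup>2 / m - y^4 / m\<^sup>3\<close> with \<open>m = 4 s\<close>: the fourth moment bound
    prevents the variance from sitting on rare large values.\<close>
  define m where "m = 4 * s"
  have m: "m > 0" using s by (simp add: m_def)
  have "expectation (\<lambda>x. (Y x)^2 / m - (Y x)^4 / m^3) \<le> expectation (\<lambda>x. \<bar>Y x\<bar>)"
    by (rule integral_mono) (use iY iabs abs_ge_power2_div_sub_power4_div[OF m] in auto)
  moreover have "expectation (\<lambda>x. (Y x)^2 / m - (Y x)^4 / m^3)
      = expectation (\<lambda>x. (Y x)^2) / m - expectation (\<lambda>x. (Y x)^4) / m^3"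
    using iY by simp
  moreover have "expectation (\<lambda>x. (Y x)^4) / m^3 \<le> 4 * s^4 / m^3"
    using EY4 m by (intro divide_right_mono) auto
  moreover have "4 * s^4 / m^3 = s / 16" and "expectation (\<lambda>x. (Y x)^2) / m = s / 4"
    using s EY2 by (simp_all add: m_def power_numeral_reduce field_simps)
  ultimately have "3 * s / 16 \<le> expectation (\<lambda>x. \<bar>Y x\<bar>)" by linarith
  moreover have "expectation (\<lambda>x. max 0 (Y x)) = expectation (\<lambda>x. \<bar>Y x\<bar>) / 2"
  proof -
    have "(\<lambda>x. max 0 (Y x)) = (\<lambda>x. (\<bar>Y x\<bar> + Y x) / 2)" by (auto simp: max_def fun_eq_iff)
    then show ?thesis using iabs iY[of 1] EY by simp
  qed
  ultimately show ?thesis by linarith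
qed

lemma expectation_max_0_indep_sum_ge:
  fixes Z :: "nat \<Rightarrow> 'a \<Rightarrow> real"
  assumes ind: "indep_vars (\<lambda>_. borel) Z UNIV"
    and bnd: "\<And>k x. \<bar>Z k x\<bar> \<le> 1"
    and EZ: "\<And>k. expectation (Z k) = 0"
    and EZ2: "\<And>k. expectation (\<lambda>x. (Z k x)^2) = v"
    and Nv: "1 \<le> real N * v"
  shows "3 / 32 * sqrt (real N * v) \<le> expectation (\<lambda>x. max 0 (\<Sum>k<N. Z k x))"
proof -
  have [measurable]: "Z k \<in> borel_measurable M" for k
    using ind by (auto simp: indep_vars_def)
  note moments = indep_sum_moments[OF ind bnd EZ EZ2, of N]
  define s where "s = sqrt (N * v)"
  have s: "s \<ge> 1" "s^2 = N * v" using Nv by (simp_all add: s_def)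
  have "s^4 = (s^2)^2" by algebra
  then have "expectation (\<lambda>x. (\<Sum>k<N. Z k x)^4) \<le> 3 * s^4 + s^2"
    using moments(3) by (simp add: s(2) power_mult_distrib)
  also have "\<dots> \<le> 4 * s^4"
    using s(1) mult_mono[of 1 s 1 s] by (simp add: power_numeral_reduce)
  finally have "3 / 32 * s \<le> expectation (\<lambda>x. max 0 (\<Sum>k<N. Z k x))"
  proof (intro expectation_max_0_ge[where B="real N"])
    show "\<bar>\<Sum>k<N. Z k x\<bar> \<le> real N" for x
    proof -
      have "\<bar>\<Sum>k<N. Z k x\<bar> \<le> (\<Sum>k<N. \<bar>Z k x\<bar>)" by (rule sum_abs)
      also have "\<dots> \<le> (\<Sum>k<N. 1)" by (intro sum_mono bnd)
      finally show ?thesis by simp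
    qed
  qed (use moments s in auto)
  then show ?thesis by (simp add: s_def)
qed

lemma centered_indicator_moments:
  assumes S: "S \<in> events"
  shows "expectation (\<lambda>x. indicator S x - prob S) = 0"
    and "expectation (\<lambda>x. (indicator S x - prob S)^2) = prob S * (1 - prob S)"
proof -
  have iS: "integrable M (indicator S :: 'a \<Rightarrow> real)"
    using S by (simp add: emeasure_eq_measure)
  show "expectation (\<lambda>x. indicator S x - prob S) = 0"
    using S iS by (simp add: prob_space)
  have "(\<lambda>x. (indicator S x - prob S)^2) = (\<lambda>x. (1 - 2 * prob S) * indicator S x + (prob S)^2)"
    by (auto simp: indicator_def power2_eq_square algebra_simps)
  then show "expectation (\<lambda>x. (indicator S x - prob S)^2) = prob S * (1 - prob S)"
    using S iS by (simp add: prob_space power2_eq_square algebra_simps)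
qed

lemma ennreal_expectation_max_0_diff_le:
  assumes f: "integrable M f" and c: "0 \<le> c"
  shows "ennreal (expectation (\<lambda>x. max 0 (f x)) - c) \<le> (\<integral>\<^sup>+x. ennreal (f x - c) \<partial>M)"
proof -
  have i: "integrable M (\<lambda>x. max 0 (f x) - c)" using f by auto
  have "expectation (\<lambda>x. max 0 (f x)) - c = expectation (\<lambda>x. max 0 (f x) - c)"
    using f by (simp add: prob_space)
  then have "ennreal (expectation (\<lambda>x. max 0 (f x)) - c) \<le> (\<integral>\<^sup>+x. ennreal (max 0 (f x) - c) \<partial>M)"
    using ennreal_integral_le_nn_integral[OF i] by simp
  also have "\<dots> \<le> (\<integral>\<^sup>+x. ennreal (f x - c) \<partial>M)"
    by (intro nn_integral_mono) (use c in \<open>auto simp: max_def ennreal_neg\<close>)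
  finally show ?thesis .
qed

end

lemma prob_space_PiM_nat:
  assumes "prob_space \<mu>"
  shows "prob_space (\<Pi>\<^sub>M k\<in>(UNIV::nat set). \<mu>)"
  by (rule prob_space_PiM) (use assms in auto)

lemma indep_vars_PiM_coordinates:
  assumes \<mu>: "prob_space \<mu>"
  shows "prob_space.indep_vars (\<Pi>\<^sub>M k\<in>(UNIV::nat set). \<mu>) (\<lambda>_. \<mu>) (\<lambda>k X. X k) UNIV"
proof -
  interpret Q: prob_space "\<Pi>\<^sub>M k\<in>(UNIV::nat set). \<mu>" by (rule prob_space_PiM_nat[OF \<mu>])
  have coordinate: "distr (\<Pi>\<^sub>M k\<in>(UNIV::nat set). \<mu>) \<mu> (\<lambda>X. X i) = \<mu>" for i
    by (rule distr_PiM_component) (use \<mu> in auto)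
  have "distr (\<Pi>\<^sub>M k\<in>(UNIV::nat set). \<mu>) (\<Pi>\<^sub>M i\<in>UNIV. \<mu>) (\<lambda>x. \<lambda>i\<in>UNIV. x i)
      = distr (\<Pi>\<^sub>M k\<in>(UNIV::nat set). \<mu>) (\<Pi>\<^sub>M i\<in>UNIV. \<mu>) (\<lambda>x. x)"
    by (rule distr_cong) (auto simp: space_PiM)
  also have "\<dots> = (\<Pi>\<^sub>M k\<in>(UNIV::nat set). \<mu>)" by (rule distr_id)
  finally show ?thesis
    by (subst Q.indep_vars_iff_distr_eq_PiM) (auto simp: coordinate)
qed

lemma integral_PiM_coordinate:
  assumes \<mu>: "prob_space \<mu>" and f: "f \<in> borel_measurable \<mu>"
  shows "(\<integral>X. f (X i) \<partial>(\<Pi>\<^sub>M k\<in>(UNIV::nat set). \<mu>)) = (\<integral>x. (f x :: real) \<partial>\<mu>)"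
proof -
  have "distr (\<Pi>\<^sub>M k\<in>(UNIV::nat set). \<mu>) \<mu> (\<lambda>X. X i) = \<mu>"
    by (rule distr_PiM_component) (use \<mu> in auto)
  then have "(\<integral>x. f x \<partial>\<mu>) = (\<integral>x. f x \<partial>distr (\<Pi>\<^sub>M k\<in>(UNIV::nat set). \<mu>) \<mu> (\<lambda>X. X i))"
    by simp
  also have "\<dots> = (\<integral>X. f (X i) \<partial>(\<Pi>\<^sub>M k\<in>(UNIV::nat set). \<mu>))"
    by (rule integral_distr) (auto simp: f)
  finally show ?thesis by simp
qed

lemma nn_integral_centered_count_ge:
  fixes \<mu> :: "'a measure" and S :: "'a set"
  defines "q \<equiv> measure \<mu> S"
  assumes \<mu>: "prob_space \<mu>" and S: "S \<in> sets \<mu>" and Nv: "1 \<le> real N * (q * (1 - q))"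
    and c: "0 \<le> c"
  shows "ennreal (3 / 32 * sqrt (real N * (q * (1 - q))) / real N - c)
    \<le> (\<integral>\<^sup>+X. ennreal ((\<Sum>k<N. indicator S (X k) - q) / real N - c) \<partial>(\<Pi>\<^sub>M k\<in>(UNIV::nat set). \<mu>))"
proof -
  define Q where "Q = (\<Pi>\<^sub>M k\<in>(UNIV::nat set). \<mu>)"
  interpret Q: prob_space Q unfolding Q_def by (rule prob_space_PiM_nat[OF \<mu>])
  interpret M: prob_space \<mu> by fact
  define Z where "Z k X = indicator S (X k) - q" for k and X :: "nat \<Rightarrow> 'a"
  have Z_moments: "Q.expectation (\<lambda>X. (Z k X)^a) = (\<integral>x. (indicator S x - q)^a \<partial>\<mu>)" for k a
    unfolding Z_def Q_def by (rule integral_PiM_coordinate[OF \<mu>]) (use S in measurable)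
  have ind: "Q.indep_vars (\<lambda>_. borel) Z UNIV"
    unfolding Z_def[abs_def] Q_def
    by (rule prob_space.indep_vars_compose2[OF prob_space_PiM_nat[OF \<mu>] indep_vars_PiM_coordinates[OF \<mu>]])
       (use S in measurable)
  have Z_meas[measurable]: "Z k \<in> borel_measurable Q" for k
    using ind by (auto simp: Q.indep_vars_def)
  have bnd: "\<bar>Z k X\<bar> \<le> 1" for k X
    using M.prob_le_1[of S] by (auto simp: Z_def q_def indicator_def)
  have EZ: "Q.expectation (Z k) = 0" for k
    using Z_moments[of k 1] M.centered_indicator_moments(1)[OF S] by (simp add: q_def)
  have EZ2: "Q.expectation (\<lambda>X. (Z k X)^2) = q * (1 - q)" for k
    using Z_moments[of k 2] M.centered_indicator_moments(2)[OF S] by (simp add: q_def)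
  have "3 / 32 * sqrt (real N * (q * (1 - q))) / real N
      \<le> Q.expectation (\<lambda>X. max 0 (\<Sum>k<N. Z k X)) / real N"
    using Q.expectation_max_0_indep_sum_ge[OF ind bnd EZ EZ2 Nv] by (rule divide_right_mono) simp
  moreover have "max 0 (y / real N) = max 0 y / real N" for y
    by (simp add: max_divide_distrib_right)
  ultimately have "ennreal (3 / 32 * sqrt (real N * (q * (1 - q))) / real N - c)
      \<le> ennreal (Q.expectation (\<lambda>X. max 0 ((\<Sum>k<N. Z k X) / real N)) - c)"
    by (intro ennreal_leI) simp
  also have "\<dots> \<le> (\<integral>\<^sup>+X. ennreal ((\<Sum>k<N. Z k X) / real N - c) \<partial>Q)"
    by (intro Q.ennreal_expectation_max_0_diff_le c Q.integrable_const_bound[where B=1])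
       (auto simp: divide_le_eq_1 intro!: order_trans[OF sum_abs] order_trans[OF sum_mono[OF bnd]])
  finally show ?thesis by (simp add: Z_def Q_def)
qed

section \<open>Empirical measures\<close>

lemma sets_empirical[simp, measurable_cong]: "sets (empirical X N) = sets borel"
  by (simp add: empirical_def)

lemma prob_space_empirical:
  assumes "N > 0"
  shows "prob_space (empirical X N)"
  unfolding empirical_def
  by (rule prob_space.prob_space_distr[OF prob_space_uniform_count_measure])
     (use assms in \<open>auto simp: measurable_cong_sets[OF sets_uniform_count_measure_count_space refl]\<close>)

lemma measurable_uniform_count_measure_borel: "X \<in> measurable (uniform_count_measure {..<N}) borel"
  by (simp add: measurable_cong_sets[OF sets_uniform_count_measure_count_space refl])

lemma empirical_moment_finite:
  assumes "N > 0"
  shows "(\<integral>\<^sup>+x. ennreal (norm x powr p) \<partial>empirical X N) < \<infinity>"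
proof -
  have "(\<integral>\<^sup>+x. ennreal (norm x powr p) \<partial>empirical X N)
      = (\<integral>\<^sup>+k. ennreal (norm (X k) powr p) \<partial>uniform_count_measure {..<N})"
    unfolding empirical_def by (rule nn_integral_distr[OF measurable_uniform_count_measure_borel]) simp
  also have "\<dots> = (\<Sum>k<N. ennreal (1 / real N) * ennreal (norm (X k) powr p))"
    unfolding uniform_count_measure_def
    by (subst nn_integral_point_measure_finite) auto
  also have "\<dots> < \<infinity>" by (simp add: ennreal_mult[symmetric])
  finally show ?thesis .
qed

lemma measure_empirical:
  assumes "N > 0" "S \<in> sets borel"
  shows "measure (empirical X N) S = (\<Sum>k<N. indicator S (X k)) / real N"
proof -
  have "measure (empirical X N) S = (\<integral>x. indicator S x \<partial>empirical X N)"
    by (simp add: empirical_def)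
  also have "\<dots> = (\<integral>k. indicator S (X k) \<partial>uniform_count_measure {..<N})"
    unfolding empirical_def by (rule integral_distr[OF measurable_uniform_count_measure_borel]) (use assms in simp)
  also have "\<dots> = (\<Sum>k<N. indicator S (X k)) / real N"
    by (simp add: integral_uniform_count_measure)
  finally show ?thesis .
qed

lemma ennreal_smooth_wasserstein_powr:
  fixes M \<nu> :: "'a::ordered_euclidean_space measure"
  assumes \<sigma>: "\<sigma> > 0" and p: "p > 0"
    and M: "prob_space M" "sets M = sets borel" "(\<integral>\<^sup>+x. ennreal (norm x powr p) \<partial>M) < \<infinity>"
    and \<nu>: "prob_space \<nu>" "sets \<nu> = sets borel" "(\<integral>\<^sup>+x. ennreal (norm x powr p) \<partial>\<nu>) < \<infinity>"
  shows "ennreal (smooth_wasserstein \<sigma> p M \<nu> powr p)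
    = wasserstein_cost p (M \<star> gaussian \<sigma>) (\<nu> \<star> gaussian \<sigma>)"
proof -
  have G: "prob_space (gaussian \<sigma> :: 'a measure)"
    by (rule prob_space_gaussian[OF \<sigma>])
  have mG: "(\<integral>\<^sup>+x. ennreal (norm x powr p) \<partial>(gaussian \<sigma> :: 'a measure)) < \<infinity>"
    by (rule gaussian_moment_finite[OF \<sigma> less_imp_le[OF p]])
  have "wasserstein_cost p (M \<star> gaussian \<sigma>) (\<nu> \<star> gaussian \<sigma>) < \<infinity>"
    using p by (intro wasserstein_cost_less_top prob_space_conv_gaussian convolution_moment_finite
        \<sigma> M \<nu> G mG) auto
  then show ?thesis
    using p by (simp add: smooth_wasserstein_def wasserstein_def powr_powr less_top[symmetric])
qed

lemma smooth_wasserstein_powr_ge_tail_diff: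
  fixes M \<nu> :: "'a::ordered_euclidean_space measure"
  assumes \<sigma>: "\<sigma> > 0" and p: "p > 0" and r: "r \<ge> 0"
    and M: "prob_space M" "sets M = sets borel" "(\<integral>\<^sup>+x. ennreal (norm x powr p) \<partial>M) < \<infinity>"
    and \<nu>: "prob_space \<nu>" "sets \<nu> = sets borel" "(\<integral>\<^sup>+x. ennreal (norm x powr p) \<partial>\<nu>) < \<infinity>"
  shows "measure M {x. norm x \<ge> \<rho> + r} - measure \<nu> {x. norm x > \<rho> - 1 - r}
           - 2 * gaussian_tail \<sigma> r TYPE('a)
         \<le> smooth_wasserstein \<sigma> p M \<nu> powr p"
proof -
  have "ennreal (measure (M \<star> gaussian \<sigma>) {x. norm x \<ge> \<rho>} - measure (\<nu> \<star> gaussian \<sigma>) {x. norm x > \<rho> - 1})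
      \<le> wasserstein_cost p (M \<star> gaussian \<sigma>) (\<nu> \<star> gaussian \<sigma>)"
  proof (rule wasserstein_cost_ge_measure_diff)
    fix x y :: 'a assume "x \<in> {x. norm x \<ge> \<rho>}" "norm (x - y) < 1"
    moreover have "norm x \<le> norm y + norm (x - y)" by (metis norm_triangle_sub add.commute)
    ultimately show "y \<in> {x. norm x > \<rho> - 1}" by auto
  qed (use p prob_space_conv_gaussian[OF \<sigma> M(1,2)] prob_space_conv_gaussian[OF \<sigma> \<nu>(1,2)] in auto)
  also have "\<dots> = ennreal (smooth_wasserstein \<sigma> p M \<nu> powr p)"
    by (rule ennreal_smooth_wasserstein_powr[symmetric, OF \<sigma> p M \<nu>])
  finally have "measure (M \<star> gaussian \<sigma>) {x. norm x \<ge> \<rho>} - measure (\<nu> \<star> gaussian \<sigma>) {x. norm x > \<rho> - 1}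
      \<le> smooth_wasserstein \<sigma> p M \<nu> powr p"
    by (simp add: ennreal_le_iff)
  moreover have "measure (M \<star> gaussian \<sigma>) {x. norm x \<ge> \<rho>} \<ge> measure M {x. norm x \<ge> \<rho> + r} - gaussian_tail \<sigma> r TYPE('a)"
    using measure_conv_gaussian_norm_ge[OF \<sigma> M(1,2) r, of \<rho>] by simp
  moreover have "measure (\<nu> \<star> gaussian \<sigma>) {x. norm x > \<rho> - 1} \<le> measure \<nu> {x. norm x > \<rho> - 1 - r} + gaussian_tail \<sigma> r TYPE('a)"
    by (rule measure_conv_gaussian_norm_gt[OF \<sigma> \<nu>(1,2)])
  ultimately show ?thesis by linarith
qed

lemma eventually_gaussian_cutoff_small:
  fixes a K \<sigma> :: real
  assumes a: "a > 0" and K: "K > 0" and \<sigma>: "\<sigma> > 0"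
  shows "\<forall>\<^sub>F N in sequentially. K * real N * exp (- (real (nat \<lfloor>a * ln (real N)\<rfloor>))\<^sup>2 / (4 * \<sigma>\<^sup>2)) \<le> 1"
proof -
  define c where "c = max 0 (ln K)"
  define L0 where "L0 = max (2 / a) (max 1 (16 * \<sigma>\<^sup>2 * (c + 1) / a\<^sup>2))"
  have "\<forall>\<^sub>F N in sequentially. exp L0 \<le> real N"
    using filterlim_real_sequentially by (simp add: filterlim_at_top)
  then show ?thesis
  proof (rule eventually_mono)
    fix N :: nat assume N: "exp L0 \<le> real N"
    define L where "L = ln (real N)"
    have Npos: "real N > 0" using N by (smt (verit) exp_gt_zero)
    then have "L0 \<le> L" using N by (simp add: L_def ln_ge_iff)
    then have L: "L \<ge> 1" "a * L \<ge> 2" "a\<^sup>2 * L / (16 * \<sigma>\<^sup>2) \<ge> c + 1"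
      using a \<sigma> by (auto simp: L0_def field_simps)
    define i where "i = real (nat \<lfloor>a * L\<rfloor>)"
    have "a * L / 2 \<le> i" using L unfolding i_def by linarith
    then have "(a * L / 2)\<^sup>2 / (4 * \<sigma>\<^sup>2) \<le> i\<^sup>2 / (4 * \<sigma>\<^sup>2)"
      using a L \<sigma> by (intro divide_right_mono power_mono) auto
    moreover have "(a * L / 2)\<^sup>2 / (4 * \<sigma>\<^sup>2) = L * (a\<^sup>2 * L / (16 * \<sigma>\<^sup>2))"
      using \<sigma> by (simp add: power2_eq_square field_simps)
    moreover have "c + L \<le> L * (c + 1)"
      using L mult_right_mono[of 1 L c] by (simp add: c_def algebra_simps)
    moreover have "L * (c + 1) \<le> L * (a\<^sup>2 * L / (16 * \<sigma>\<^sup>2))" using L by (intro mult_left_mono) auto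
    ultimately have "exp (- i\<^sup>2 / (4 * \<sigma>\<^sup>2)) \<le> exp (- c) * exp (- L)" by (simp flip: exp_add)
    also have "\<dots> = exp (- c) / real N" using Npos by (simp add: L_def exp_minus field_simps)
    finally have "K * real N * exp (- i\<^sup>2 / (4 * \<sigma>\<^sup>2)) \<le> K * exp (- c)"
      using K Npos by (simp add: field_simps)
    also have "K * exp (- c) \<le> 1"
    proof -
      have "K \<le> exp c" using K by (metis c_def exp_ln exp_le_cancel_iff max.cobounded2)
      then show ?thesis by (simp add: exp_minus field_simps)
    qed
    finally show "K * real N * exp (- (real (nat \<lfloor>a * ln (real N)\<rfloor>))\<^sup>2 / (4 * \<sigma>\<^sup>2)) \<le> 1"
      by (simp add: i_def L_def)
  qed
qed

lemma fluctuation_rate_ge: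
  fixes N e \<epsilon> t v :: real
  assumes N: "64 \<le> N" and e: "0 < e" "e \<le> \<epsilon>" "e \<le> 1/4"
    and v: "N powr (-2 * e) / 8 \<le> v" and t: "t \<le> 1 / (128 * N)"
  shows "1 \<le> N * v" and "1/64 * N powr (- 1 / 2 - \<epsilon>) \<le> 3 / 32 * sqrt (N * v) / N - 2 * t"
proof -
  have Np: "N > 0" using N by simp
  define P where "P = N powr (- 1 / 2 - e)"
  have P: "P > 0" using Np by (simp add: P_def)
  have NP2: "(N * P)^2 = N powr (1 - 2 * e)"
    using Np by (simp add: P_def power2_eq_square powr_add[symmetric] powr_mult_base)
  have "N * v \<ge> N * (N powr (-2 * e) / 8)" using v Np by (intro mult_left_mono) auto
  also have "N * (N powr (-2 * e) / 8) = (N * P)^2 / 8"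
    using Np by (simp add: NP2 powr_mult_base)
  finally have Nv: "(N * P)^2 / 8 \<le> N * v" .
  have "8 \<le> sqrt N" using real_sqrt_le_mono[OF N] by simp
  also have "sqrt N = N powr (1/2)" using Np by (simp add: powr_half_sqrt)
  also have "\<dots> \<le> (N * P)^2" unfolding NP2 using e N by (intro powr_mono) auto
  finally show "1 \<le> N * v" using Nv by linarith
  have "N * P / 3 \<le> N * P / sqrt 8"
    using Np P by (intro divide_left_mono) (auto simp: real_le_lsqrt)
  also have "N * P / sqrt 8 = sqrt ((N * P)^2 / 8)" using Np P by (simp add: real_sqrt_divide)
  also have "\<dots> \<le> sqrt (N * v)" using Nv by simp
  finally have "P / 32 \<le> 3 / 32 * sqrt (N * v) / N" using Np by (simp add: field_simps)
  moreover have "2 * t \<le> P / 64"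
  proof -
    have "N powr (-1) \<le> P" unfolding P_def using e N by (intro powr_mono) auto
    then have "1 \<le> N * P" using Np by (simp add: powr_minus_divide field_simps)
    moreover have "N * (128 * t) \<le> 1" using t Np by (simp add: field_simps)
    ultimately have "N * (128 * t) \<le> N * P" by linarith
    then show ?thesis using Np by simp
  qed
  moreover have "N powr (- 1 / 2 - \<epsilon>) \<le> P" unfolding P_def using e N by (intro powr_mono) auto
  ultimately show "1/64 * N powr (- 1 / 2 - \<epsilon>) \<le> 3 / 32 * sqrt (N * v) / N - 2 * t" by linarith
qed

lemma powr_neg_le_half_power_floor:
  assumes e: "e > 0" and N: "real N \<ge> 1"
  shows "real N powr (-2 * e) \<le> (1/2) ^ nat \<lfloor>2 * e / ln 2 * ln (real N)\<rfloor>"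
proof -
  define i where "i = nat \<lfloor>2 * e / ln 2 * ln (real N)\<rfloor>"
  have "0 \<le> 2 * e / ln 2 * ln (real N)" using e N by simp
  then have "real i \<le> 2 * e / ln 2 * ln (real N)" unfolding i_def by linarith
  then have "2 powr (- (2 * e / ln 2 * ln (real N))) \<le> 2 powr (- real i)"
    by (intro powr_mono) auto
  also have "2 powr (- real i) = (1/2) ^ i"
    by (simp add: powr_minus powr_realpow power_one_over inverse_eq_divide)
  finally show ?thesis using N by (simp add: i_def powr_def)
qed

lemma sq_geometric_smooth_wasserstein_empirical_ge:
  fixes X :: "nat \<Rightarrow> 'a::ordered_euclidean_space" and N i :: nat
  defines "S \<equiv> {x::'a. norm x \<ge> (real i + 1)\<^sup>2}"
  assumes p: "p > 0" and \<sigma>: "\<sigma> > 0" and N: "N > 0"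
  shows "(\<Sum>k<N. indicator S (X k) - measure sq_geometric S) / real N - 2 * gaussian_tail \<sigma> (real i) TYPE('a)
    \<le> smooth_wasserstein \<sigma> p (empirical X N) sq_geometric powr p"
proof -
  txt \<open>With \<open>\<rho> = (i + 1)\<^sup>2 - i\<close> the two test sets are \<open>{norm x \<ge> (i + 1)\<^sup>2}\<close> and
    \<open>{norm x > i\<^sup>2}\<close>, which carry the same mass under the witness.\<close>
  have "(\<Sum>k<N. indicator S (X k) - measure sq_geometric S) / real N
      = measure (empirical X N) S - measure sq_geometric S"
    using N by (simp add: measure_empirical S_def sum_subtractf diff_divide_distrib)
  also have "\<dots> = measure (empirical X N) {x. norm x \<ge> ((real i + 1)\<^sup>2 - real i) + real i}
      - measure (sq_geometric :: 'a measure) {x. norm x > ((real i + 1)\<^sup>2 - real i) - 1 - real i}"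
    using measure_sq_geometric_norm_gt[of i, where 'a='a] measure_sq_geometric_norm_ge[of i, where 'a='a]
    by (simp add: S_def power2_eq_square algebra_simps)
  finally show ?thesis
    using smooth_wasserstein_powr_ge_tail_diff[OF \<sigma> p of_nat_0_le_iff[of i]
        prob_space_empirical[OF N, of X] sets_empirical empirical_moment_finite[OF N, where X=X]
        prob_space_sq_geometric sets_sq_geometric sq_geometric_moment_finite[OF less_imp_le[OF p]],
        where \<rho>="(real i + 1)\<^sup>2 - real i"]
    by linarith
qed

lemma sq_geometric_expected_smooth_wasserstein_ge:
  fixes N i :: nat
  assumes p: "p > 0" and \<sigma>: "\<sigma> > 0" and N: "64 \<le> real N"
    and e: "0 < e" "e \<le> \<epsilon>" "e \<le> 1/4"
    and half: "real N powr (-2 * e) \<le> (1/2) ^ i"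
    and cutoff: "128 * sqrt 2 ^ DIM('a) * real N * exp (- (real i)\<^sup>2 / (4 * \<sigma>\<^sup>2)) \<le> 1"
  shows "ennreal (1/64 * real N powr (- 1 / 2 - \<epsilon>))
    \<le> (\<integral>\<^sup>+X. ennreal (smooth_wasserstein \<sigma> p (empirical X N) sq_geometric powr p)
         \<partial>(\<Pi>\<^sub>M k\<in>(UNIV::nat set). (sq_geometric :: 'a::ordered_euclidean_space measure)))"
proof -
  let ?\<mu> = "sq_geometric :: 'a measure"
  define S where "S = {x::'a. norm x \<ge> (real i + 1)\<^sup>2}"
  define q where "q = measure ?\<mu> S"
  define t where "t = sqrt 2 ^ DIM('a) * exp (- (real i)\<^sup>2 / (4 * \<sigma>\<^sup>2))"
  have Npos: "N > 0" using N by simp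
  have t: "0 \<le> t" "t \<le> 1 / (128 * real N)" using cutoff Npos by (auto simp: t_def field_simps)
  have "real N powr (-2 * e) / 8 \<le> q * (1 - q)"
  proof -
    have q: "(1/2) ^ (i + 2) \<le> q" "q \<le> 1/2"
      using geometric_half_prob_greater_bounds[of i]
      unfolding S_def q_def measure_sq_geometric_norm_ge by auto
    then have "real N powr (-2 * e) / 4 \<le> q" using half by (simp add: power_add)
    moreover have "q / 2 \<le> q * (1 - q)"
      using q(2) mult_left_mono[of "1/2" "1 - q" q] by (simp add: q_def)
    ultimately show ?thesis by linarith
  qed
  note rate = fluctuation_rate_ge[OF N e this t(2)]
  have "gaussian_tail \<sigma> (real i) TYPE('a) \<le> t"
    unfolding t_def by (rule gaussian_tail_le[OF \<sigma>]) simp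
  then have pointwise: "ennreal ((\<Sum>k<N. indicator S (X k) - q) / real N - 2 * t)
      \<le> ennreal (smooth_wasserstein \<sigma> p (empirical X N) ?\<mu> powr p)" for X
    using sq_geometric_smooth_wasserstein_empirical_ge[OF p \<sigma> Npos, of i X]
    by (intro ennreal_leI) (simp add: S_def q_def)
  have "ennreal (1/64 * real N powr (- 1 / 2 - \<epsilon>))
      \<le> ennreal (3 / 32 * sqrt (real N * (q * (1 - q))) / real N - 2 * t)"
    using rate(2) by (rule ennreal_leI)
  also have "\<dots> \<le> (\<integral>\<^sup>+X. ennreal ((\<Sum>k<N. indicator S (X k) - q) / real N - 2 * t) \<partial>(\<Pi>\<^sub>M k\<in>UNIV. ?\<mu>))"
    using rate(1) t(1) unfolding q_def
    by (intro nn_integral_centered_count_ge prob_space_sq_geometric) (auto simp: S_def)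
  also have "\<dots> \<le> (\<integral>\<^sup>+X. ennreal (smooth_wasserstein \<sigma> p (empirical X N) ?\<mu> powr p) \<partial>(\<Pi>\<^sub>M k\<in>UNIV. ?\<mu>))"
    by (intro nn_integral_mono pointwise)
  finally show ?thesis .
qed

lemma eventually_sq_geometric_expected_smooth_wasserstein_ge:
  assumes p: "p > 0" and \<sigma>: "\<sigma> > 0" and \<epsilon>: "\<epsilon> > 0"
  shows "\<forall>\<^sub>F N in sequentially. ennreal (1/64 * real N powr (- 1 / 2 - \<epsilon>))
    \<le> (\<integral>\<^sup>+X. ennreal (smooth_wasserstein \<sigma> p (empirical X N) sq_geometric powr p)
         \<partial>(\<Pi>\<^sub>M k\<in>(UNIV::nat set). (sq_geometric :: 'a::ordered_euclidean_space measure)))"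
proof -
  define e where "e = min \<epsilon> (1/4)"
  have e: "0 < e" "e \<le> \<epsilon>" "e \<le> 1/4" using \<epsilon> by (auto simp: e_def)
  have "\<forall>\<^sub>F N in sequentially. 64 \<le> real N \<and> 128 * sqrt 2 ^ DIM('a) * real N
      * exp (- (real (nat \<lfloor>2 * e / ln 2 * ln (real N)\<rfloor>))\<^sup>2 / (4 * \<sigma>\<^sup>2)) \<le> 1"
    using e \<sigma> by (intro eventually_conj eventually_gaussian_cutoff_small
        eventually_ge_at_top[of 64, THEN eventually_mono]) auto
  then show ?thesis
  proof (rule eventually_mono, elim conjE)
    fix N :: nat
    assume N: "64 \<le> real N"
      and "128 * sqrt 2 ^ DIM('a) * real N
        * exp (- (real (nat \<lfloor>2 * e / ln 2 * ln (real N)\<rfloor>))\<^sup>2 / (4 * \<sigma>\<^sup>2)) \<le> 1"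
    moreover have "real N powr (-2 * e) \<le> (1/2) ^ nat \<lfloor>2 * e / ln 2 * ln (real N)\<rfloor>"
      using N by (intro powr_neg_le_half_power_floor e(1)) simp
    ultimately show "ennreal (1/64 * real N powr (- 1 / 2 - \<epsilon>))
        \<le> (\<integral>\<^sup>+X. ennreal (smooth_wasserstein \<sigma> p (empirical X N) sq_geometric powr p)
             \<partial>(\<Pi>\<^sub>M k\<in>(UNIV::nat set). (sq_geometric :: 'a measure)))"
      using sq_geometric_expected_smooth_wasserstein_ge[OF p \<sigma> N e] by blast
  qed
qed

theorem theorem2p9:
  fixes p \<sigma> :: real
  assumes "p \<ge> 1" and "\<sigma> > 0"
  shows "\<exists>\<mu> :: (real ^ 'd) measure. (\<forall>q\<ge>1. \<mu> \<in> P_q q) \<and>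
           (\<exists>C>0. \<forall>\<epsilon>>0. \<exists>N\<^sub>\<epsilon>::nat. \<forall>N\<ge>N\<^sub>\<epsilon>.
              (\<integral>\<^sup>+X. ennreal ((smooth_wasserstein \<sigma> p (empirical X N) \<mu>) powr p)
                 \<partial>(\<Pi>\<^sub>M k\<in>(UNIV::nat set). \<mu>))
              \<ge> ennreal (C * real N powr (- 1 / 2 - \<epsilon>)))"
proof -
  have "p > 0" using assms(1) by simp
  note bound = eventually_sq_geometric_expected_smooth_wasserstein_ge[OF this assms(2),
      where 'a="real ^ 'd", unfolded eventually_sequentially]
  show ?thesis
    using sq_geometric_in_P_q bound
    by (intro exI[of _ sq_geometric] conjI exI[of _ "1/64::real"]) auto
qed

end
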